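(* Let $\mathcal F=\{f\in C(\mathcal X):\|f\|_\infty\le\log(3/2),\ L_f=0\}$. Then $e^{\mathrm{ad\text{-}stoch}}_n(\mathcal F,S_{\mathrm{samp}},D_{\sup\text{-}\log})=0$ for all $n\ge1$.
   Context: $\mathcal X=[0,1]^d$ with Lebesgue measure. For bounded measurable $f$: $Z_f=\int_{\mathcal X}e^f dx$, $L_f=\log Z_f$, $P_f$ the distribution with density $e^f/Z_f$; $S_{\mathrm{samp}}(f)=P_f$. $D_{\sup\text{-}\log}(P,Q)=\|\log(dP/dQ)\|_\infty$ ($\infty$ unless mutually absolutely continuous). Stochastic sampling algorithms: given a probability space $(\Omega,P_\Omega)$, a random sample has the form $X_f(\omega)=\tilde\phi(N(f,\omega),\omega)\in\mathcal X$, where $N(f,\omega)=(f(x_1),\dots,f(x_n))$ with each $x_k$ allowed to depend on $\omega$ and on $f(x_1),\dots,f(x_{k-1})$; $\tilde S(f)$ is the distribution of $X_f(\omega)$, $\omega\sim P_\Omega$. $\mathcal A^{\mathrm{ad\text{-}stoch}}_n$ is the set of all such $\tilde S$, and $e^{\mathrm{ad\text{-}stoch}}_n(\mathcal F,S_{\mathrm{samp}},D)=\inf_{\tilde S\in\mathcal A^{\mathrm{ad\text{-}stoch}}_n}\sup_{f\in\mathcal F}D(P_f,\tilde S(f))$. *)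

theory Defs
  imports "HOL-Probability.Probability"
begin

text \<open>The domain X = [0,1]^d, as the unit box of a Euclidean space 'a (d = DIM('a)),
  carrying the Borel sigma-algebra and Lebesgue measure.\<close>

definition Xdom :: "'a::euclidean_space set" where
  "Xdom = cbox 0 One"

definition Xmeas :: "'a::euclidean_space measure" where
  "Xmeas = restrict_space lborel Xdom"

definition Zf :: "('a::euclidean_space \<Rightarrow> real) \<Rightarrow> real" where
  "Zf f = (\<integral>x. exp (f x) \<partial>Xmeas)"

definition Lf :: "('a::euclidean_space \<Rightarrow> real) \<Rightarrow> real" where
  "Lf f = ln (Zf f)"

definition Pf :: "('a::euclidean_space \<Rightarrow> real) \<Rightarrow> 'a measure" where
  "Pf f = density Xmeas (\<lambda>x. ennreal (exp (f x) / Zf f))"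

definition S_samp :: "('a::euclidean_space \<Rightarrow> real) \<Rightarrow> 'a measure" where
  "S_samp f = Pf f"

text \<open>sup-log distance: ess-sup of |log (dP/dQ)| if P, Q mutually absolutely continuous,
  infinity otherwise.  (RN_deriv Q P is dP/dQ.)\<close>
definition D_sup_log :: "'a measure \<Rightarrow> 'a measure \<Rightarrow> ereal" where
  "D_sup_log P Q =
     (if absolutely_continuous Q P \<and> absolutely_continuous P Q
      then esssup Q (\<lambda>x. ereal \<bar>ln (enn2real (RN_deriv Q P x))\<bar>)
      else \<infinity>)"

text \<open>Adaptive information: psi k omega [y_1..y_k] is the (k+1)-st node, chosen depending on
  omega and the previously observed values.\<close>
fun info :: "(nat \<Rightarrow> (nat \<Rightarrow> real) \<Rightarrow> real list \<Rightarrow> 'a) \<Rightarrow> ('a \<Rightarrow> real) \<Rightarrow> (nat \<Rightarrow> real) \<Rightarrow> nat \<Rightarrow> real list" where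
  "info psi f \<omega> 0 = []"
| "info psi f \<omega> (Suc k) = (let ys = info psi f \<omega> k in ys @ [f (psi k \<omega> ys)])"

definition alg_sample ::
  "nat \<Rightarrow> (nat \<Rightarrow> (nat \<Rightarrow> real) \<Rightarrow> real list \<Rightarrow> 'a) \<Rightarrow> (real list \<Rightarrow> (nat \<Rightarrow> real) \<Rightarrow> 'a) \<Rightarrow> ('a \<Rightarrow> real) \<Rightarrow> (nat \<Rightarrow> real) \<Rightarrow> 'a" where
  "alg_sample n psi phi f \<omega> = phi (info psi f \<omega> n) \<omega>"

definition ad_stoch_algs ::
  "nat \<Rightarrow> ((nat \<Rightarrow> real) measure \<times> (nat \<Rightarrow> (nat \<Rightarrow> real) \<Rightarrow> real list \<Rightarrow> 'a::euclidean_space) \<times> (real list \<Rightarrow> (nat \<Rightarrow> real) \<Rightarrow> 'a)) set" where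
  "ad_stoch_algs n = {(\<Omega>, psi, phi).
      prob_space \<Omega> \<and>
      (\<forall>k \<omega> ys. psi k \<omega> ys \<in> Xdom) \<and>
      (\<forall>ys \<omega>. phi ys \<omega> \<in> Xdom) \<and>
      (\<forall>f. f \<in> borel_measurable borel \<and> bounded (range f) \<longrightarrow>
            alg_sample n psi phi f \<in> measurable \<Omega> Xmeas)}"

definition alg_dist ::
  "nat \<Rightarrow> (nat \<Rightarrow> real) measure \<Rightarrow> (nat \<Rightarrow> (nat \<Rightarrow> real) \<Rightarrow> real list \<Rightarrow> 'a::euclidean_space) \<Rightarrow> (real list \<Rightarrow> (nat \<Rightarrow> real) \<Rightarrow> 'a) \<Rightarrow> ('a \<Rightarrow> real) \<Rightarrow> 'a measure" where
  "alg_dist n \<Omega> psi phi f = distr \<Omega> Xmeas (alg_sample n psi phi f)"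

definition e_ad_stoch ::
  "nat \<Rightarrow> ('a::euclidean_space \<Rightarrow> real) set \<Rightarrow> (('a \<Rightarrow> real) \<Rightarrow> 'a measure) \<Rightarrow> ('a measure \<Rightarrow> 'a measure \<Rightarrow> ereal) \<Rightarrow> ereal" where
  "e_ad_stoch n F S D =
     (INF A \<in> ad_stoch_algs n. case A of (\<Omega>, psi, phi) \<Rightarrow>
        (SUP f \<in> F. D (S f) (alg_dist n \<Omega> psi phi f)))"

definition F_prop11 :: "('a::euclidean_space \<Rightarrow> real) set" where
  "F_prop11 = {f. continuous_on Xdom f \<and> (\<forall>x\<in>Xdom. \<bar>f x\<bar> \<le> ln (3/2)) \<and> Lf f = 0}"

end

theory Submission
  imports Defs
begin

(* An algorithm with zero error: draw x and z uniformly from the cube and u uniformly from [0,1],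
   query f (only) at x, and output x if u <= exp (f x) - 2/3, otherwise z.  Since
   2/3 <= exp f <= 3/2 on F, p = exp f - 2/3 is a valid acceptance probability, and the output
   has density p + (1 - \<integral>p) = exp f, which is the density of P_f because Z_f = 1.  Hence the
   sup-log distance vanishes for every f in F, and it is never negative. *)

lemma prob_space_embed_measure:
  assumes "prob_space M" "inj f"
  shows "prob_space (embed_measure M f)"
  using prob_space.prob_space_distr[OF assms(1) measurable_embed_measure2[OF assms(2)]]
  by (simp flip: embed_measure_eq_distr[OF assms(2)])

lemma distr_embed_measure:
  assumes "inj f" "(\<lambda>x. g (f x)) \<in> M \<rightarrow>\<^sub>M N"
  shows "distr (embed_measure M f) N g = distr M N (\<lambda>x. g (f x))"
proof -
  have "distr (embed_measure M f) N g = distr (distr M (embed_measure M f) f) N g"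
    by (simp flip: embed_measure_eq_distr[OF assms(1)])
  also have "\<dots> = distr M N (\<lambda>x. g (f x))"
    using assms by (simp add: distr_distr measurable_embed_measure1 measurable_embed_measure2 comp_def)
  finally show ?thesis .
qed

lemma D_sup_log_nonneg:
  assumes "prob_space Q"
  shows "0 \<le> D_sup_log P Q"
proof -
  interpret prob_space Q by fact
  have "esssup Q (\<lambda>x. 0 :: ereal) \<le> esssup Q (\<lambda>x. ereal \<bar>ln (enn2real (RN_deriv Q P x))\<bar>)"
    by (rule esssup_mono) auto
  then show ?thesis
    by (simp add: D_sup_log_def esssup_const emeasure_space_1)
qed

lemma D_sup_log_self:
  assumes "prob_space Q"
  shows "D_sup_log Q Q = 0"
proof -
  interpret prob_space Q by fact
  have "AE x in Q. 1 = RN_deriv Q Q x"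
    by (rule RN_deriv_unique) (simp_all add: density_1)
  then have "AE x in Q. ereal \<bar>ln (enn2real (RN_deriv Q Q x))\<bar> \<le> 0"
    by eventually_elim (simp flip: zero_ereal_def)
  then have "esssup Q (\<lambda>x. ereal \<bar>ln (enn2real (RN_deriv Q Q x))\<bar>) \<le> 0"
    by (intro esssup_I) measurable
  with D_sup_log_nonneg[OF assms, of Q] show ?thesis
    by (simp add: D_sup_log_def absolutely_continuous_def)
qed

lemma e_ad_stoch_D_sup_log_nonneg:
  fixes f :: "'a::euclidean_space \<Rightarrow> real"
  assumes "f \<in> F" "f \<in> borel_measurable borel" "bounded (range f)"
  shows "0 \<le> e_ad_stoch n F S D_sup_log"
  unfolding e_ad_stoch_def
proof (intro INF_greatest, clarify)
  fix \<Omega> psi and phi :: "real list \<Rightarrow> (nat \<Rightarrow> real) \<Rightarrow> 'a"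
  assume "(\<Omega>, psi, phi) \<in> ad_stoch_algs n"
  then have "prob_space (alg_dist n \<Omega> psi phi f)"
    using assms unfolding ad_stoch_algs_def alg_dist_def by (auto intro: prob_space.prob_space_distr)
  then have "0 \<le> D_sup_log (S f) (alg_dist n \<Omega> psi phi f)"
    by (rule D_sup_log_nonneg)
  also have "\<dots> \<le> (SUP g \<in> F. D_sup_log (S g) (alg_dist n \<Omega> psi phi g))"
    using assms(1) by (rule SUP_upper)
  finally show "0 \<le> (SUP g \<in> F. D_sup_log (S g) (alg_dist n \<Omega> psi phi g))" .
qed

definition uniform01 :: "real measure" where
  "uniform01 = restrict_space lborel {0..1}"

lemma prob_space_uniform01: "prob_space uniform01"
  unfolding uniform01_def by (rule prob_spaceI) (simp add: space_restrict_space emeasure_restrict_space)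

lemma measurable_uniform01_ident [measurable]: "(\<lambda>u. u) \<in> borel_measurable uniform01"
  unfolding uniform01_def by (intro measurable_restrict_space1) simp

lemma nn_integral_uniform01_threshold:
  assumes "0 \<le> c" "c \<le> 1"
  shows "(\<integral>\<^sup>+u. (if u \<le> c then a else b) \<partial>uniform01) = a * ennreal c + b * ennreal (1 - c)"
proof -
  have "(\<integral>\<^sup>+u. (if u \<le> c then a else b) \<partial>uniform01)
      = (\<integral>\<^sup>+u. a * indicator {0..c} u + b * indicator {c<..1} u \<partial>lborel)"
    unfolding uniform01_def using assms
    by (subst nn_integral_restrict_space) (auto intro!: nn_integral_cong simp: indicator_def)
  also have "\<dots> = a * ennreal c + b * ennreal (1 - c)"
    using assms by (simp add: nn_integral_add nn_integral_cmult_indicator)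
  finally show ?thesis .
qed

definition accept_or_resample :: "('a \<Rightarrow> real) \<Rightarrow> 'a \<times> 'a \<times> real \<Rightarrow> 'a" where
  "accept_or_resample p t = (case t of (x, z, u) \<Rightarrow> if u \<le> p x then x else z)"

lemma measurable_accept_or_resample [measurable]:
  assumes [measurable]: "p \<in> borel_measurable M"
  shows "accept_or_resample p \<in> M \<Otimes>\<^sub>M (M \<Otimes>\<^sub>M uniform01) \<rightarrow>\<^sub>M M"
  unfolding accept_or_resample_def by measurable

lemma emeasure_distr_accept_or_resample:
  assumes "prob_space M" and p [measurable]: "p \<in> borel_measurable M"
    and p01: "\<And>x. x \<in> space M \<Longrightarrow> 0 \<le> p x \<and> p x \<le> 1"
    and A [measurable]: "A \<in> sets M"
  shows "emeasure (distr (M \<Otimes>\<^sub>M (M \<Otimes>\<^sub>M uniform01)) M (accept_or_resample p)) A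
       = (\<integral>\<^sup>+x. indicator A x * ennreal (p x) + emeasure M A * ennreal (1 - p x) \<partial>M)"
proof -
  interpret M: prob_space M by fact
  interpret U: prob_space uniform01 by (rule prob_space_uniform01)
  interpret MU: pair_prob_space M uniform01 ..
  have "emeasure (distr (M \<Otimes>\<^sub>M (M \<Otimes>\<^sub>M uniform01)) M (accept_or_resample p)) A
      = (\<integral>\<^sup>+t. indicator A (accept_or_resample p t) \<partial>(M \<Otimes>\<^sub>M (M \<Otimes>\<^sub>M uniform01)))"
    by (simp flip: nn_integral_indicator add: nn_integral_distr)
  also have "\<dots> = (\<integral>\<^sup>+x. \<integral>\<^sup>+z. \<integral>\<^sup>+u. indicator A (if u \<le> p x then x else z) \<partial>uniform01 \<partial>M \<partial>M)"
  proof -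
    have "(\<lambda>(z, u). indicator A (if u \<le> p x then x else z) :: ennreal) \<in> borel_measurable (M \<Otimes>\<^sub>M uniform01)"
      if "x \<in> space M" for x
      using that by measurable
    then show ?thesis
      by (simp add: MU.nn_integral_fst[symmetric] U.nn_integral_fst[symmetric] accept_or_resample_def
          cong: nn_integral_cong)
  qed
  also have "\<dots> = (\<integral>\<^sup>+x. \<integral>\<^sup>+z. indicator A x * ennreal (p x) + indicator A z * ennreal (1 - p x) \<partial>M \<partial>M)"
    by (intro nn_integral_cong) (simp add: nn_integral_uniform01_threshold p01 if_distrib[of "indicator A"])
  also have "\<dots> = (\<integral>\<^sup>+x. indicator A x * ennreal (p x) + emeasure M A * ennreal (1 - p x) \<partial>M)"
    by (intro nn_integral_cong) (simp add: nn_integral_add nn_integral_multc M.emeasure_space_1)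
  finally show ?thesis .
qed

lemma distr_accept_or_resample:
  assumes "prob_space M" and p [measurable]: "p \<in> borel_measurable M"
    and p01: "\<And>x. x \<in> space M \<Longrightarrow> 0 \<le> p x \<and> p x \<le> 1"
  shows "distr (M \<Otimes>\<^sub>M (M \<Otimes>\<^sub>M uniform01)) M (accept_or_resample p)
       = density M (\<lambda>x. ennreal (p x + (1 - (\<integral>y. p y \<partial>M))))"
proof (rule measure_eqI)
  interpret M: prob_space M by fact
  define r where "r = 1 - (\<integral>y. p y \<partial>M)"
  have int_p: "integrable M p"
    using p01 by (intro M.integrable_const_bound[where B = 1]) auto
  have r: "0 \<le> r"
    unfolding r_def using p01 M.integral_le_const[OF int_p, of 1] by auto
  have "(\<integral>\<^sup>+x. ennreal (1 - p x) \<partial>M) = ennreal (\<integral>x. 1 - p x \<partial>M)"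
    using p01 int_p by (intro nn_integral_eq_integral) auto
  also have "\<dots> = ennreal r"
    using int_p by (simp add: r_def M.prob_space)
  finally have int_q: "(\<integral>\<^sup>+x. ennreal (1 - p x) \<partial>M) = ennreal r" .
  fix A assume "A \<in> sets (distr (M \<Otimes>\<^sub>M (M \<Otimes>\<^sub>M uniform01)) M (accept_or_resample p))"
  then have A [measurable]: "A \<in> sets M" by simp
  have "emeasure (distr (M \<Otimes>\<^sub>M (M \<Otimes>\<^sub>M uniform01)) M (accept_or_resample p)) A
      = (\<integral>\<^sup>+x. ennreal (p x) * indicator A x \<partial>M) + emeasure M A * ennreal r"
    using assms A int_q
    by (simp add: emeasure_distr_accept_or_resample nn_integral_add nn_integral_cmult mult.commute)
  also have "\<dots> = (\<integral>\<^sup>+x. ennreal (p x) * indicator A x + ennreal r * indicator A x \<partial>M)"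
    by (simp add: nn_integral_add nn_integral_cmult_indicator mult.commute)
  also have "\<dots> = (\<integral>\<^sup>+x. ennreal (p x + r) * indicator A x \<partial>M)"
    using p01 r by (intro nn_integral_cong) (simp add: ennreal_plus distrib_right)
  also have "\<dots> = emeasure (density M (\<lambda>x. ennreal (p x + r))) A"
    by (simp add: emeasure_density)
  finally show "emeasure (distr (M \<Otimes>\<^sub>M (M \<Otimes>\<^sub>M uniform01)) M (accept_or_resample p)) A
      = emeasure (density M (\<lambda>x. ennreal (p x + (1 - (\<integral>y. p y \<partial>M))))) A"
    by (simp add: r_def)
qed simp

lemma space_Xmeas: "space Xmeas = Xdom"
  by (simp add: Xmeas_def space_restrict_space)

lemma prob_space_Xmeas: "prob_space Xmeas"
  unfolding Xmeas_def
  by (rule prob_spaceI) (simp add: space_restrict_space emeasure_restrict_space Xdom_def inner_Basis)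

lemma borel_measurable_F_prop11:
  assumes "f \<in> F_prop11"
  shows "f \<in> borel_measurable Xmeas"
proof -
  have "f \<in> borel_measurable (restrict_space borel Xdom)"
    using assms by (intro borel_measurable_continuous_on_restrict) (simp add: F_prop11_def)
  moreover have "sets (restrict_space borel Xdom) = sets Xmeas"
    unfolding Xmeas_def by (rule sets_restrict_space_cong) simp
  ultimately show ?thesis
    using measurable_cong_sets by blast
qed

lemma exp_F_prop11_bounds:
  assumes "f \<in> F_prop11" "x \<in> Xdom"
  shows "2/3 \<le> exp (f x)" "exp (f x) \<le> 3/2"
proof -
  have "- ln (3/2) \<le> f x" "f x \<le> ln (3/2)"
    using assms by (auto simp: F_prop11_def)
  then have "exp (- ln (3/2)) \<le> exp (f x)" "exp (f x) \<le> exp (ln (3/2))"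
    by (simp_all only: exp_le_cancel_iff)
  then show "2/3 \<le> exp (f x)" "exp (f x) \<le> 3/2"
    by (simp_all add: exp_minus)
qed

lemma integrable_exp_F_prop11:
  assumes "f \<in> F_prop11"
  shows "integrable Xmeas (\<lambda>x. exp (f x))"
proof -
  interpret prob_space Xmeas by (rule prob_space_Xmeas)
  show ?thesis
    using exp_F_prop11_bounds[OF assms] borel_measurable_F_prop11[OF assms]
    by (intro integrable_const_bound[where B = "3/2"]) (auto simp: space_Xmeas)
qed

lemma Zf_F_prop11:
  assumes "f \<in> F_prop11"
  shows "Zf f = 1"
proof -
  interpret prob_space Xmeas by (rule prob_space_Xmeas)
  \<comment> \<open>positivity of Z_f is needed: ln also vanishes on nonpositive arguments\<close>
  have "2/3 \<le> Zf f"
    unfolding Zf_def using exp_F_prop11_bounds(1)[OF assms]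
    by (intro integral_ge_const integrable_exp_F_prop11 assms) (auto simp: space_Xmeas)
  with assms show ?thesis
    by (simp add: F_prop11_def Lf_def)
qed

lemma zero_in_F_prop11: "(\<lambda>x. 0) \<in> F_prop11"
proof -
  interpret prob_space Xmeas by (rule prob_space_Xmeas)
  show ?thesis
    by (simp add: F_prop11_def Lf_def Zf_def prob_space)
qed

lemma distr_accept_or_resample_F_prop11:
  assumes "f \<in> F_prop11"
  shows "distr (Xmeas \<Otimes>\<^sub>M (Xmeas \<Otimes>\<^sub>M uniform01)) Xmeas (accept_or_resample (\<lambda>x. exp (f x) - 2/3))
       = S_samp f"
proof -
  interpret prob_space Xmeas by (rule prob_space_Xmeas)
  note f [measurable] = borel_measurable_F_prop11[OF assms]
  have "distr (Xmeas \<Otimes>\<^sub>M (Xmeas \<Otimes>\<^sub>M uniform01)) Xmeas (accept_or_resample (\<lambda>x. exp (f x) - 2/3))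
      = density Xmeas (\<lambda>x. ennreal (exp (f x) - 2/3 + (1 - (\<integral>y. exp (f y) - 2/3 \<partial>Xmeas))))"
    using exp_F_prop11_bounds[OF assms]
    by (intro distr_accept_or_resample prob_space_Xmeas) (force simp: space_Xmeas)+
  also have "(\<integral>y. exp (f y) - 2/3 \<partial>Xmeas) = Zf f - 2/3"
    using integrable_exp_F_prop11[OF assms] by (simp add: Zf_def prob_space)
  finally show ?thesis
    by (simp add: Zf_F_prop11[OF assms] S_samp_def Pf_def)
qed

definition basis_enum :: "nat \<Rightarrow> 'a::euclidean_space" where
  "basis_enum = from_nat_into Basis"

lemma range_basis_enum: "range basis_enum = Basis"
  unfolding basis_enum_def by (rule range_from_nat_into) (auto intro: countable_finite)

(* Sample spaces of algorithms live on nat => real, so a triple (x, z, u) is stored with u in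
   slot 0 and the coordinates of x and z interleaved in the remaining slots. *)
definition encode_triple :: "'a::euclidean_space \<times> 'a \<times> real \<Rightarrow> nat \<Rightarrow> real" where
  "encode_triple t i = (case t of (x, z, u) \<Rightarrow>
     case i of 0 \<Rightarrow> u | Suc j \<Rightarrow> (if even j then x else z) \<bullet> basis_enum (j div 2))"

lemma inj_encode_triple: "inj encode_triple"
proof (rule injI, unfold split_paired_all)
  fix x z x' z' :: 'a and u u'
  assume e: "encode_triple (x, z, u) = encode_triple (x', z', u')"
  have "x \<bullet> b = x' \<bullet> b \<and> z \<bullet> b = z' \<bullet> b" if "b \<in> Basis" for b
  proof -
    obtain j where "b = basis_enum j"
      using \<open>b \<in> Basis\<close> range_basis_enum by blast
    then show ?thesis
      using fun_cong[OF e, of "Suc (2 * j)"] fun_cong[OF e, of "Suc (2 * j + 1)"]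
      by (simp add: encode_triple_def)
  qed
  moreover have "u = u'"
    using fun_cong[OF e, of 0] by (simp add: encode_triple_def)
  ultimately show "(x, z, u) = (x', z', u')"
    by (simp add: euclidean_eq_iff[of x] euclidean_eq_iff[of z])
qed

(* Off the image of encode_triple the algorithm still has to produce points of Xdom. *)
definition into_Xdom :: "'a::euclidean_space \<Rightarrow> 'a" where
  "into_Xdom x = (if x \<in> Xdom then x else 0)"

lemma into_Xdom_in_Xdom: "into_Xdom x \<in> Xdom"
  by (simp add: into_Xdom_def Xdom_def mem_box)

definition accept_or_resample_nodes :: "nat \<Rightarrow> (nat \<Rightarrow> real) \<Rightarrow> real list \<Rightarrow> 'a::euclidean_space" where
  "accept_or_resample_nodes k \<omega> ys = into_Xdom (fst (inv encode_triple \<omega>))"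

definition accept_or_resample_output :: "real list \<Rightarrow> (nat \<Rightarrow> real) \<Rightarrow> 'a::euclidean_space" where
  "accept_or_resample_output ys \<omega> =
     into_Xdom (accept_or_resample (\<lambda>_. exp (hd ys) - 2/3) (inv encode_triple \<omega>))"

definition accept_or_resample_space :: "'a::euclidean_space itself \<Rightarrow> (nat \<Rightarrow> real) measure" where
  "accept_or_resample_space _ =
     embed_measure (Xmeas \<Otimes>\<^sub>M (Xmeas \<Otimes>\<^sub>M uniform01) :: ('a \<times> 'a \<times> real) measure) encode_triple"

lemma info_accept_or_resample_nodes:
  "info accept_or_resample_nodes f \<omega> k = replicate k (f (into_Xdom (fst (inv encode_triple \<omega>))))"
  by (induction k) (simp_all add: accept_or_resample_nodes_def replicate_append_same)

lemma alg_sample_accept_or_resample_encode: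
  assumes "n \<ge> 1" "t \<in> space (Xmeas \<Otimes>\<^sub>M (Xmeas \<Otimes>\<^sub>M uniform01))"
  shows "alg_sample n accept_or_resample_nodes accept_or_resample_output f (encode_triple t)
       = accept_or_resample (\<lambda>x. exp (f x) - 2/3) t"
proof -
  obtain x z u where t: "t = (x, z, u)" and "x \<in> Xdom" "z \<in> Xdom"
    using assms(2) by (cases t) (auto simp: space_pair_measure space_Xmeas)
  moreover have "hd (replicate n y) = y" for y :: real
    using assms(1) by (cases n) simp_all
  ultimately show ?thesis
    by (simp add: alg_sample_def info_accept_or_resample_nodes accept_or_resample_output_def
        inj_encode_triple accept_or_resample_def into_Xdom_def)
qed

lemma measurable_alg_sample_accept_or_resample_encode:
  fixes f :: "'a::euclidean_space \<Rightarrow> real"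
  assumes "n \<ge> 1" "f \<in> borel_measurable Xmeas"
  shows "(\<lambda>t. alg_sample n accept_or_resample_nodes accept_or_resample_output f (encode_triple t))
       \<in> (Xmeas \<Otimes>\<^sub>M (Xmeas \<Otimes>\<^sub>M uniform01) :: ('a \<times> 'a \<times> real) measure) \<rightarrow>\<^sub>M Xmeas"
proof -
  have "accept_or_resample (\<lambda>x. exp (f x) - 2/3) \<in> Xmeas \<Otimes>\<^sub>M (Xmeas \<Otimes>\<^sub>M uniform01) \<rightarrow>\<^sub>M Xmeas"
    using assms(2) by measurable
  then show ?thesis
    by (rule measurable_cong[THEN iffD2, rotated]) (rule alg_sample_accept_or_resample_encode[OF assms(1)])
qed

lemma accept_or_resample_in_ad_stoch_algs:
  assumes "n \<ge> 1"
  shows "(accept_or_resample_space TYPE('a), accept_or_resample_nodes, accept_or_resample_output)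
       \<in> (ad_stoch_algs n :: (_ \<times> _ \<times> (_ \<Rightarrow> _ \<Rightarrow> 'a::euclidean_space)) set)"
proof -
  have "alg_sample n accept_or_resample_nodes accept_or_resample_output f
      \<in> accept_or_resample_space TYPE('a) \<rightarrow>\<^sub>M Xmeas"
    if "f \<in> borel_measurable borel" for f :: "'a \<Rightarrow> real"
    unfolding accept_or_resample_space_def
  proof (intro measurable_embed_measure1 measurable_alg_sample_accept_or_resample_encode assms)
    show "f \<in> borel_measurable Xmeas"
      using that unfolding Xmeas_def by (intro measurable_restrict_space1) simp
  qed
  moreover have "prob_space (accept_or_resample_space TYPE('a))"
    unfolding accept_or_resample_space_def
    by (intro prob_space_embed_measure inj_encode_triple prob_space_pair prob_space_Xmeas
        prob_space_uniform01)
  ultimately show ?thesis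
    by (simp add: ad_stoch_algs_def accept_or_resample_nodes_def accept_or_resample_output_def
        into_Xdom_in_Xdom)
qed

lemma alg_dist_accept_or_resample:
  assumes "n \<ge> 1" "f \<in> borel_measurable Xmeas"
  shows "alg_dist n (accept_or_resample_space TYPE('a)) accept_or_resample_nodes accept_or_resample_output f
       = distr (Xmeas \<Otimes>\<^sub>M (Xmeas \<Otimes>\<^sub>M uniform01)) Xmeas
           (accept_or_resample (\<lambda>x::'a::euclidean_space. exp (f x) - 2/3))"
  unfolding alg_dist_def accept_or_resample_space_def
  using assms
  by (simp add: distr_embed_measure inj_encode_triple measurable_alg_sample_accept_or_resample_encode
      alg_sample_accept_or_resample_encode cong: distr_cong)

lemma D_sup_log_accept_or_resample_F_prop11:
  fixes f :: "'a::euclidean_space \<Rightarrow> real"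
  assumes "n \<ge> 1" "f \<in> F_prop11"
  shows "D_sup_log (S_samp f)
           (alg_dist n (accept_or_resample_space TYPE('a)) accept_or_resample_nodes accept_or_resample_output f) = 0"
proof -
  note f [measurable] = borel_measurable_F_prop11[OF assms(2)]
  note dist_eq = alg_dist_accept_or_resample[OF assms(1) f]
  have "prob_space
      (alg_dist n (accept_or_resample_space TYPE('a)) accept_or_resample_nodes accept_or_resample_output f)"
    unfolding dist_eq
    by (intro prob_space.prob_space_distr prob_space_pair prob_space_Xmeas prob_space_uniform01) measurable
  then show ?thesis
    by (simp add: D_sup_log_self dist_eq distr_accept_or_resample_F_prop11[OF assms(2)])
qed

theorem proposition11:
  fixes n :: nat
  assumes "n \<ge> 1"
  shows "e_ad_stoch n (F_prop11 :: ('a::euclidean_space \<Rightarrow> real) set) S_samp D_sup_log = 0"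
proof (rule antisym)
  have "e_ad_stoch n (F_prop11 :: ('a \<Rightarrow> real) set) S_samp D_sup_log
      \<le> (SUP f \<in> (F_prop11 :: ('a \<Rightarrow> real) set). D_sup_log (S_samp f)
           (alg_dist n (accept_or_resample_space TYPE('a)) accept_or_resample_nodes accept_or_resample_output f))"
    unfolding e_ad_stoch_def
    by (rule INF_lower2[OF accept_or_resample_in_ad_stoch_algs[OF assms]]) simp
  also have "\<dots> \<le> 0"
    by (rule SUP_least) (simp add: D_sup_log_accept_or_resample_F_prop11[OF assms])
  finally show "e_ad_stoch n (F_prop11 :: ('a \<Rightarrow> real) set) S_samp D_sup_log \<le> 0" .
  show "0 \<le> e_ad_stoch n (F_prop11 :: ('a \<Rightarrow> real) set) S_samp D_sup_log"
    by (rule e_ad_stoch_D_sup_log_nonneg[OF zero_in_F_prop11]) auto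
qed

end
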